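(* Let $\Omega\subsetneq\mathbb{S}^m$ be a domain and $\rho\in C^1(\Omega)$ such that the metric $g=e^{2\rho}g_0$ is a complete Riemannian metric on $\Omega$ and $\sigma=e^{-\rho}$ is the restriction to $\Omega$ of a continuous function defined on $\overline{\Omega}$. Then the associated map $\phi:\Omega\to\mathbb{H}^{m+1}$ is proper.
   Context: $\mathbb{S}^m\subset\mathbb{R}^{m+1}$ is the unit sphere with round metric $g_0$; $\nabla$ and $|\cdot|$ denote gradient and norm with respect to $g_0$. Let $\mathbb{L}^{m+2}$ be $\mathbb{R}^{m+2}$ with $\langle\!\langle x,y\rangle\!\rangle=-x_0y_0+\sum_{i=1}^{m+1}x_iy_i$, and $\mathbb{H}^{m+1}=\{x:\langle\!\langle x,x\rangle\!\rangle=-1,\ x_0>0\}$. For $\rho\in C^1(\Omega)$ the associated map $\phi=\phi^\rho:\Omega\to\mathbb{H}^{m+1}$ is $$\phi(x)=\frac{e^{\rho(x)}}{2}\Big(1+e^{-2\rho(x)}\big(1+|\nabla\rho(x)|^2\big)\Big)(1,x)+e^{-\rho(x)}\big(0,-x+\nabla\rho(x)\big).$$ Proper means preimages of compact sets are compact. *)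

theory Defs
  imports "HOL-Analysis.Analysis"
begin

text \<open>The unit sphere S^m is modelled as sphere 0 1 in a Euclidean space 'a
  of dimension m+1; Lorentz space L^{m+2} is modelled as real \<times> 'a,
  with first component x_0.\<close>

definition lorentz :: "real \<times> 'a::euclidean_space \<Rightarrow> real \<times> 'a \<Rightarrow> real" where
  "lorentz x y = - fst x * fst y + snd x \<bullet> snd y"

definition hyperbolic_space :: "(real \<times> 'a::euclidean_space) set" where
  "hyperbolic_space = {x. lorentz x x = -1 \<and> fst x > 0}"

definition sgrad :: "'a::euclidean_space set \<Rightarrow> ('a \<Rightarrow> real) \<Rightarrow> 'a \<Rightarrow> 'a" where
  "sgrad \<Omega> \<rho> x = (SOME v. v \<bullet> x = 0 \<and> (\<rho> has_derivative (\<lambda>h. v \<bullet> h)) (at x within \<Omega>))"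

definition sphere_C1 :: "'a::euclidean_space set \<Rightarrow> ('a \<Rightarrow> real) \<Rightarrow> bool" where
  "sphere_C1 \<Omega> \<rho> \<longleftrightarrow>
     (\<forall>x\<in>\<Omega>. \<exists>v. v \<bullet> x = 0 \<and> (\<rho> has_derivative (\<lambda>h. v \<bullet> h)) (at x within \<Omega>))
     \<and> continuous_on \<Omega> (sgrad \<Omega> \<rho>)"

definition conf_length :: "('a::euclidean_space \<Rightarrow> real) \<Rightarrow> (real \<Rightarrow> 'a) \<Rightarrow> real" where
  "conf_length \<rho> \<gamma> = integral {0..1} (\<lambda>t. exp (\<rho> (\<gamma> t)) * norm (vector_derivative \<gamma> (at t)))"

definition conf_dist :: "'a::euclidean_space set \<Rightarrow> ('a \<Rightarrow> real) \<Rightarrow> 'a \<Rightarrow> 'a \<Rightarrow> real" where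
  "conf_dist \<Omega> \<rho> x y = Inf {conf_length \<rho> \<gamma> | \<gamma>. valid_path \<gamma> \<and> path_image \<gamma> \<subseteq> \<Omega>
                                \<and> pathstart \<gamma> = x \<and> pathfinish \<gamma> = y}"

text \<open>Completeness of (Omega, g): every Cauchy sequence for the Riemannian distance
  converges to a point of Omega (the topology of g is the subspace topology).\<close>

definition conf_complete :: "'a::euclidean_space set \<Rightarrow> ('a \<Rightarrow> real) \<Rightarrow> bool" where
  "conf_complete \<Omega> \<rho> \<longleftrightarrow>
     (\<forall>X. (\<forall>n. X n \<in> \<Omega>) \<and> (\<forall>e>0. \<exists>N. \<forall>m\<ge>N. \<forall>n\<ge>N. conf_dist \<Omega> \<rho> (X m) (X n) < e)
          \<longrightarrow> (\<exists>x\<in>\<Omega>. X \<longlonglongrightarrow> x))"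

definition assoc_map :: "'a::euclidean_space set \<Rightarrow> ('a \<Rightarrow> real) \<Rightarrow> 'a \<Rightarrow> real \<times> 'a" where
  "assoc_map \<Omega> \<rho> x =
     (let c = exp (\<rho> x) / 2 * (1 + exp (-2 * \<rho> x) * (1 + (norm (sgrad \<Omega> \<rho> x))\<^sup>2))
      in (c, c *\<^sub>R x + exp (- \<rho> x) *\<^sub>R (sgrad \<Omega> \<rho> x - x)))"

end

theory Submission
  imports Defs
begin

text \<open>Since \<open>e\<^sup>\<rho> \<le> 2 |\<phi>|\<close>, the continuous extension \<open>s\<close> of \<open>\<sigma> = e\<^sup>-\<^sup>\<rho>\<close> is bounded
  below on the preimage of a compact set; so properness follows once \<open>s\<close> vanishes on the
  boundary of \<open>\<Omega>\<close>, for then the preimage is closed in the sphere.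

  Let \<open>q\<close> be a point of \<open>S\<^sup>m - \<Omega>\<close> nearest to some \<open>p \<in> \<Omega>\<close>. The open cap around \<open>p\<close>
  with \<open>q\<close> on its rim lies in \<open>\<Omega>\<close>, and it is convex in the sense that the radial projection
  of a chord joins any two of its points inside it. If \<open>s q > 0\<close>, then \<open>e\<^sup>\<rho>\<close> is bounded
  near \<open>q\<close>, so along these projected chords the \<open>g\<close>-distance is at most a constant times the
  Euclidean distance. A sequence in the cap converging to \<open>q\<close> is therefore \<open>g\<close>-Cauchy, and
  completeness would put \<open>q\<close> into \<open>\<Omega>\<close>. Hence \<open>s q = 0\<close>; such rim points approximate every
  boundary point, so \<open>s\<close> vanishes on the whole boundary.\<close>

lemma norm_diff_proj_unit_le:
  fixes e h :: "'a::real_inner"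
  assumes "norm e = 1"
  shows "norm (h - (e \<bullet> h) *\<^sub>R e) \<le> norm h"
proof -
  have "e \<bullet> e = 1"
    using assms by (simp add: dot_square_norm)
  then have "(h - (e \<bullet> h) *\<^sub>R e) \<bullet> (h - (e \<bullet> h) *\<^sub>R e) = h \<bullet> h - (e \<bullet> h)\<^sup>2"
    by (simp add: inner_diff_left inner_diff_right inner_commute power2_eq_square)
  then show ?thesis
    by (simp add: norm_le)
qed

lemma norm_sgn_diff_le:
  fixes u q :: "'a::real_normed_vector"
  assumes "norm q = 1"
  shows "norm (sgn u - q) \<le> 2 * norm (u - q)"
proof (cases "u = 0")
  case True
  then show ?thesis using assms by simp
next
  case False
  have "norm (sgn u - u) = \<bar>1 - norm u\<bar>"
  proof -
    have "sgn u - u = (inverse (norm u) - 1) *\<^sub>R u"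
      by (simp add: sgn_div_norm algebra_simps)
    then have "norm (sgn u - u) = \<bar>(inverse (norm u) - 1) * norm u\<bar>"
      by (simp add: abs_mult)
    also have "(inverse (norm u) - 1) * norm u = 1 - norm u"
      using False by (simp add: field_simps)
    finally show ?thesis .
  qed
  also have "\<dots> \<le> norm (u - q)"
    using norm_triangle_ineq3[of u q] assms by (simp add: abs_minus_commute)
  finally show ?thesis
    using norm_triangle_ineq[of "sgn u - u" "u - q"] by simp
qed

lemma dist_sphere_sq:
  fixes p y :: "'a::real_inner"
  assumes "norm p = 1" "norm y = 1"
  shows "(dist p y)\<^sup>2 = 2 - 2 * (y \<bullet> p)"
proof -
  have "p \<bullet> p = 1" "y \<bullet> y = 1"
    using assms by (simp_all add: dot_square_norm)
  then show ?thesis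
    by (simp add: dist_norm power2_norm_eq_inner inner_diff_left inner_diff_right inner_commute)
qed

lemma has_vector_derivative_sgn:
  fixes \<gamma> :: "real \<Rightarrow> 'a::real_inner"
  assumes \<gamma>: "(\<gamma> has_vector_derivative v) (at t within T)" and nz: "\<gamma> t \<noteq> 0"
  shows "((\<lambda>t. sgn (\<gamma> t)) has_vector_derivative
           (v - (sgn (\<gamma> t) \<bullet> v) *\<^sub>R sgn (\<gamma> t)) /\<^sub>R norm (\<gamma> t)) (at t within T)"
proof -
  have "((\<lambda>t. norm (\<gamma> t)) has_real_derivative sgn (\<gamma> t) \<bullet> v) (at t within T)"
    using has_derivative_compose[OF \<gamma>[unfolded has_vector_derivative_def] has_derivative_norm[OF nz]]
    by (simp add: has_field_derivative_def o_def inner_commute mult_commute_abs)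
  then have "((\<lambda>t. inverse (norm (\<gamma> t))) has_real_derivative
               - (sgn (\<gamma> t) \<bullet> v) / (norm (\<gamma> t))\<^sup>2) (at t within T)"
    using nz by (auto intro!: derivative_eq_intros simp: power2_eq_square field_simps)
  from has_vector_derivative_scaleR[OF this \<gamma>] show ?thesis
    using nz by (simp add: sgn_div_norm power2_eq_square divide_inverse_commute algebra_simps)
qed

lemma valid_path_sgn_linepath:
  fixes a b :: "'a::real_inner"
  assumes "0 \<notin> closed_segment a b"
  shows "valid_path (\<lambda>t. sgn (linepath a b t))"
proof -
  define D where "D = (\<lambda>t. (b - a - (sgn (linepath a b t) \<bullet> (b - a)) *\<^sub>R sgn (linepath a b t))
                              /\<^sub>R norm (linepath a b t))"
  have nz: "linepath a b t \<noteq> 0" if "t \<in> {0..1}" for t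
    using assms linepath_in_path[OF that] by metis
  have "((\<lambda>t. sgn (linepath a b t)) has_vector_derivative D t) (at t)" if "t \<in> {0..1}" for t
    unfolding D_def by (rule has_vector_derivative_sgn[OF has_vector_derivative_linepath_within nz[OF that]])
  moreover have "continuous_on {0..1} D"
    unfolding D_def using nz by (intro continuous_intros) auto
  ultimately have "(\<lambda>t. sgn (linepath a b t)) C1_differentiable_on {0..1}"
    unfolding C1_differentiable_on_def by blast
  then show ?thesis
    unfolding valid_path_def by (rule C1_differentiable_imp_piecewise)
qed

lemma norm_vector_derivative_sgn_linepath_le:
  fixes a b :: "'a::real_inner"
  assumes "linepath a b t \<noteq> 0"
  shows "norm (vector_derivative (\<lambda>t. sgn (linepath a b t)) (at t))
           \<le> norm (b - a) / norm (linepath a b t)"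
proof -
  have "vector_derivative (\<lambda>t. sgn (linepath a b t)) (at t)
        = (b - a - (sgn (linepath a b t) \<bullet> (b - a)) *\<^sub>R sgn (linepath a b t)) /\<^sub>R norm (linepath a b t)"
    by (rule vector_derivative_at[OF has_vector_derivative_sgn[OF has_vector_derivative_linepath_within assms]])
  moreover have "norm (b - a - (sgn (linepath a b t) \<bullet> (b - a)) *\<^sub>R sgn (linepath a b t)) \<le> norm (b - a)"
    using assms by (intro norm_diff_proj_unit_le) (simp add: norm_sgn)
  ultimately show ?thesis
    by (simp add: divide_right_mono flip: divide_inverse_commute)
qed

lemma conf_length_nonneg: "0 \<le> conf_length \<rho> \<gamma>"
  unfolding conf_length_def
  by (cases "(\<lambda>t. exp (\<rho> (\<gamma> t)) * norm (vector_derivative \<gamma> (at t))) integrable_on {0..1}")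
     (auto intro!: integral_nonneg simp: not_integrable_integral)

lemma conf_dist_le:
  assumes "valid_path \<gamma>" "path_image \<gamma> \<subseteq> \<Omega>" "pathstart \<gamma> = x" "pathfinish \<gamma> = y"
    and bound: "\<And>t. t \<in> {0..1} \<Longrightarrow> exp (\<rho> (\<gamma> t)) * norm (vector_derivative \<gamma> (at t)) \<le> B"
  shows "conf_dist \<Omega> \<rho> x y \<le> B"
proof -
  have "conf_length \<rho> \<gamma> \<le> B"
  proof (cases "(\<lambda>t. exp (\<rho> (\<gamma> t)) * norm (vector_derivative \<gamma> (at t))) integrable_on {0..1}")
    case True
    then have "conf_length \<rho> \<gamma> \<le> integral {0..1::real} (\<lambda>t. B)"
      unfolding conf_length_def by (rule integral_le) (use bound in auto)
    then show ?thesis by simp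
  next
    case False
    have "0 \<le> B"
      by (rule order_trans[OF mult_nonneg_nonneg[OF exp_ge_zero norm_ge_zero] bound[of 0]]) simp
    with False show ?thesis
      unfolding conf_length_def by (simp add: not_integrable_integral)
  qed
  then show ?thesis
    unfolding conf_dist_def using assms(1-4) conf_length_nonneg
    by (intro cInf_lower2[of "conf_length \<rho> \<gamma>"] bdd_belowI[where m=0]) auto
qed

lemma conf_dist_sgn_linepath_le:
  fixes a b :: "'a::euclidean_space"
  assumes "norm a = 1" "norm b = 1" "0 < r" and far: "\<And>u. u \<in> closed_segment a b \<Longrightarrow> r \<le> norm u"
    and "sgn ` closed_segment a b \<subseteq> \<Omega>"
    and exp_le: "\<And>y. y \<in> sgn ` closed_segment a b \<Longrightarrow> exp (\<rho> y) \<le> M"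
  shows "conf_dist \<Omega> \<rho> a b \<le> M * norm (b - a) / r"
proof (rule conf_dist_le)
  have "0 \<notin> closed_segment a b"
    using far \<open>0 < r\<close> by force
  then show "valid_path (\<lambda>t. sgn (linepath a b t))"
    by (rule valid_path_sgn_linepath)
  show "path_image (\<lambda>t. sgn (linepath a b t)) \<subseteq> \<Omega>"
    using assms(5) by (simp add: path_image_def image_image[symmetric] linepath_image_01)
  show "pathstart (\<lambda>t. sgn (linepath a b t)) = a" "pathfinish (\<lambda>t. sgn (linepath a b t)) = b"
    using assms(1,2) by (simp_all add: pathstart_def pathfinish_def sgn_div_norm linepath_0' linepath_1')
  fix t :: real
  assume t: "t \<in> {0..1}"
  then have u: "linepath a b t \<in> closed_segment a b"
    by (rule linepath_in_path)
  then have r: "r \<le> norm (linepath a b t)"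
    by (rule far)
  have exp: "exp (\<rho> (sgn (linepath a b t))) \<le> M"
    using exp_le u by blast
  have "norm (vector_derivative (\<lambda>t. sgn (linepath a b t)) (at t))
        \<le> norm (b - a) / norm (linepath a b t)"
    using r \<open>0 < r\<close> by (intro norm_vector_derivative_sgn_linepath_le) auto
  also have "\<dots> \<le> norm (b - a) / r"
    using r \<open>0 < r\<close> by (intro divide_left_mono mult_pos_pos) auto
  finally have "exp (\<rho> (sgn (linepath a b t))) * norm (vector_derivative (\<lambda>t. sgn (linepath a b t)) (at t))
                \<le> M * (norm (b - a) / r)"
    using exp by (intro mult_mono) (auto intro: order_trans[OF less_imp_le[OF exp_gt_zero]])
  then show "exp (\<rho> (sgn (linepath a b t))) * norm (vector_derivative (\<lambda>t. sgn (linepath a b t)) (at t))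
             \<le> M * norm (b - a) / r"
    by simp
qed

lemma conf_complete_limit_in:
  assumes complete: "conf_complete \<Omega> \<rho>" and X: "\<And>n. X n \<in> \<Omega>" "X \<longlonglongrightarrow> q"
    and lipschitz: "\<And>m n. N \<le> m \<Longrightarrow> N \<le> n \<Longrightarrow> conf_dist \<Omega> \<rho> (X m) (X n) \<le> C * dist (X m) (X n)"
  shows "q \<in> \<Omega>"
proof -
  have "\<exists>K. \<forall>m\<ge>K. \<forall>n\<ge>K. conf_dist \<Omega> \<rho> (X m) (X n) < e" if "0 < e" for e
  proof -
    have "0 < e / (\<bar>C\<bar> + 1)"
      using \<open>0 < e\<close> by (simp add: add_nonneg_pos)
    then obtain K where K: "\<And>m n. K \<le> m \<Longrightarrow> K \<le> n \<Longrightarrow> dist (X m) (X n) < e / (\<bar>C\<bar> + 1)"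
      using LIMSEQ_imp_Cauchy[OF X(2)] unfolding Cauchy_def by blast
    have "conf_dist \<Omega> \<rho> (X m) (X n) < e" if "max N K \<le> m" "max N K \<le> n" for m n
    proof -
      have "C * dist (X m) (X n) \<le> (\<bar>C\<bar> + 1) * dist (X m) (X n)"
        by (intro mult_right_mono) auto
      also have "\<dots> < e"
        using K[of m n] that by (simp add: pos_less_divide_eq mult.commute)
      finally show ?thesis
        using lipschitz[of m n] that by linarith
    qed
    then show ?thesis by blast
  qed
  then obtain x where "x \<in> \<Omega>" "X \<longlonglongrightarrow> x"
    using complete X(1) unfolding conf_complete_def by blast
  with LIMSEQ_unique[OF X(2)] show ?thesis
    by blast
qed

definition open_cap :: "'a::real_inner \<Rightarrow> real \<Rightarrow> 'a set" where
  "open_cap p c = {y. norm y = 1 \<and> c < y \<bullet> p}"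

lemma sgn_in_open_cap:
  fixes u p :: "'a::real_inner"
  assumes "norm u \<le> 1" "c < u \<bullet> p" "0 \<le> c"
  shows "sgn u \<in> open_cap p c"
proof -
  have "u \<noteq> 0"
    using assms(2,3) by auto
  then have "u \<bullet> p \<le> (u \<bullet> p) / norm u"
    using assms by (simp add: le_divide_eq mult_left_le)
  also have "\<dots> = sgn u \<bullet> p"
    by (simp add: sgn_div_norm divide_inverse mult.commute)
  finally show ?thesis
    using assms \<open>u \<noteq> 0\<close> by (simp add: open_cap_def norm_sgn)
qed

lemma sgn_closed_segment_subset_open_cap:
  fixes a b p :: "'a::real_inner"
  assumes "0 \<le> c" "a \<in> open_cap p c" "b \<in> open_cap p c"
  shows "sgn ` closed_segment a b \<subseteq> open_cap p c"
proof -
  have "closed_segment a b \<subseteq> cball 0 1 \<inter> {u. c < p \<bullet> u}"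
    using assms(2,3)
    by (intro closed_segment_subset convex_Int convex_cball convex_halfspace_gt)
       (auto simp: open_cap_def inner_commute)
  then show ?thesis
    using assms(1) by (auto intro!: sgn_in_open_cap simp: inner_commute)
qed

lemma open_cap_eq_sphere_inter_ball:
  fixes p q :: "'a::real_inner"
  assumes "norm p = 1" "norm q = 1"
  shows "open_cap p (q \<bullet> p) = sphere 0 1 \<inter> ball p (dist p q)"
proof -
  have "q \<bullet> p < y \<bullet> p \<longleftrightarrow> dist p y < dist p q" if "norm y = 1" for y
  proof -
    have "dist p y < dist p q \<longleftrightarrow> (dist p y)\<^sup>2 < (dist p q)\<^sup>2"
      by (metis not_le power_mono_iff zero_le_dist zero_less_numeral)
    then show ?thesis
      using dist_sphere_sq[OF assms(1) that] dist_sphere_sq[OF assms] by linarith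
  qed
  then show ?thesis
    by (auto simp: open_cap_def)
qed

lemma rim_in_closure_open_cap:
  fixes p q :: "'a::real_inner"
  assumes p: "norm p = 1" and q: "norm q = 1" and c: "0 \<le> q \<bullet> p" "q \<bullet> p < 1"
  shows "q \<in> closure (open_cap p (q \<bullet> p))"
proof -
  define t :: "nat \<Rightarrow> real" where "t n = inverse (Suc n)" for n
  have t: "0 < t n" "t n \<le> 1" for n
    by (simp_all add: t_def inverse_le_1_iff)
  have "sgn (linepath q p (t n)) \<in> open_cap p (q \<bullet> p)" for n
  proof (rule sgn_in_open_cap)
    show "norm (linepath q p (t n)) \<le> 1"
      using norm_triangle_ineq[of "(1 - t n) *\<^sub>R q" "t n *\<^sub>R p"] t[of n] p q
      by (simp add: linepath_def)
    have "linepath q p (t n) \<bullet> p = q \<bullet> p + t n * (1 - q \<bullet> p)"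
      using p by (simp add: linepath_def dot_square_norm algebra_simps)
    then show "q \<bullet> p < linepath q p (t n) \<bullet> p"
      using t[of n] c(2) by simp
  qed (use c in simp)
  moreover have "(\<lambda>n. sgn (linepath q p (t n))) \<longlonglongrightarrow> sgn (linepath q p 0)"
    using q unfolding t_def linepath_def
    by (intro tendsto_intros LIMSEQ_inverse_real_of_nat) auto
  moreover have "sgn (linepath q p 0) = q"
    using q by (simp add: sgn_div_norm linepath_0')
  ultimately show ?thesis
    unfolding closure_sequential by metis
qed

lemma conf_dist_open_cap_le:
  fixes a b q :: "'a::euclidean_space"
  assumes cap: "open_cap p c \<subseteq> \<Omega>" and "0 \<le> c" and q: "norm q = 1" and "0 < \<delta>"
    and exp_le: "\<And>y. y \<in> \<Omega> \<Longrightarrow> dist y q < \<delta> \<Longrightarrow> exp (\<rho> y) \<le> M"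
    and a: "a \<in> open_cap p c" "dist a q < min (\<delta>/2) (1/2)"
    and b: "b \<in> open_cap p c" "dist b q < min (\<delta>/2) (1/2)"
  shows "conf_dist \<Omega> \<rho> a b \<le> 2 * M * dist a b"
proof -
  have "a \<in> ball q (min (\<delta>/2) (1/2))" "b \<in> ball q (min (\<delta>/2) (1/2))"
    using a(2) b(2) by (simp_all add: dist_commute)
  then have seg: "closed_segment a b \<subseteq> ball q (min (\<delta>/2) (1/2))"
    by (rule closed_segment_subset[OF _ _ convex_ball])
  have sgn_cap: "sgn ` closed_segment a b \<subseteq> open_cap p c"
    using \<open>0 \<le> c\<close> a(1) b(1) by (rule sgn_closed_segment_subset_open_cap)
  have "conf_dist \<Omega> \<rho> a b \<le> M * norm (b - a) / (1/2)"
  proof (rule conf_dist_sgn_linepath_le)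
    show "norm a = 1" "norm b = 1"
      using a(1) b(1) by (simp_all add: open_cap_def)
    show "1/2 \<le> norm u" if "u \<in> closed_segment a b" for u
    proof -
      have "u \<in> ball q (min (\<delta>/2) (1/2))"
        using seg that by (rule subsetD)
      then have "norm (q - u) < 1/2"
        by (simp add: dist_norm)
      then show ?thesis
        using q norm_triangle_ineq3[of q u] by linarith
    qed
    show "sgn ` closed_segment a b \<subseteq> \<Omega>"
      using sgn_cap cap by (rule order_trans)
    show "exp (\<rho> y) \<le> M" if y: "y \<in> sgn ` closed_segment a b" for y
    proof (rule exp_le)
      show "y \<in> \<Omega>"
        using y sgn_cap cap by (meson subsetD)
      obtain u where u: "u \<in> closed_segment a b" "y = sgn u"
        using y by (rule imageE)
      have "u \<in> ball q (min (\<delta>/2) (1/2))"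
        using seg u(1) by (rule subsetD)
      then have "2 * dist u q < \<delta>"
        by (simp add: dist_commute)
      moreover have "dist y q \<le> 2 * dist u q"
        using norm_sgn_diff_le[OF q, of u] u(2) by (simp add: dist_norm)
      ultimately show "dist y q < \<delta>"
        by linarith
    qed
  qed (rule half_gt_zero[OF zero_less_one])
  then show ?thesis
    by (simp add: dist_norm norm_minus_commute)
qed

lemma exp_bounded_near_positive_extension:
  fixes \<Omega> :: "'a::metric_space set" and s :: "'a \<Rightarrow> real"
  assumes s: "continuous_on (closure \<Omega>) s" "\<forall>x\<in>\<Omega>. s x = exp (- \<rho> x)"
    and "q \<in> closure \<Omega>" "0 < s q"
  obtains \<delta> where "0 < \<delta>" "\<And>y. y \<in> \<Omega> \<Longrightarrow> dist y q < \<delta> \<Longrightarrow> exp (\<rho> y) \<le> 2 / s q"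
proof -
  have "\<exists>\<delta>>0. \<forall>y\<in>closure \<Omega>. dist y q < \<delta> \<longrightarrow> dist (s y) (s q) < s q / 2"
    using s(1) assms(3,4) unfolding continuous_on_iff by (meson half_gt_zero)
  then obtain \<delta> where "0 < \<delta>" and \<delta>: "\<And>y. y \<in> closure \<Omega> \<Longrightarrow> dist y q < \<delta> \<Longrightarrow> dist (s y) (s q) < s q / 2"
    by auto
  have "exp (\<rho> y) \<le> 2 / s q" if "y \<in> \<Omega>" "dist y q < \<delta>" for y
  proof -
    have "y \<in> closure \<Omega>"
      using closure_subset that(1) by (rule subsetD)
    then have "dist (s y) (s q) < s q / 2"
      using that(2) by (rule \<delta>)
    then have "s q / 2 < s y"
      unfolding dist_real_def by linarith
    then have "s q / 2 < exp (- \<rho> y)"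
      using s(2) that(1) by simp
    then show ?thesis
      using \<open>0 < s q\<close> by (simp add: exp_minus field_simps)
  qed
  with \<open>0 < \<delta>\<close> show ?thesis
    using that by blast
qed

lemma extension_vanishes_at_cap_rim:
  fixes \<Omega> :: "'a::euclidean_space set"
  assumes complete: "conf_complete \<Omega> \<rho>"
    and s: "continuous_on (closure \<Omega>) s" "\<forall>x\<in>\<Omega>. s x = exp (- \<rho> x)"
    and cap: "open_cap p (q \<bullet> p) \<subseteq> \<Omega>" and p: "norm p = 1" and q: "norm q = 1"
    and c: "0 \<le> q \<bullet> p" "q \<bullet> p < 1" and "q \<notin> \<Omega>"
  shows "q \<in> closure \<Omega>" "s q = 0"
proof -
  have q_closure_cap: "q \<in> closure (open_cap p (q \<bullet> p))"
    by (rule rim_in_closure_open_cap[OF p q c])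
  then obtain X where X: "\<And>n. X n \<in> open_cap p (q \<bullet> p)" "X \<longlonglongrightarrow> q"
    unfolding closure_sequential by auto
  show q_cl: "q \<in> closure \<Omega>"
    using closure_mono[OF cap] q_closure_cap by (rule subsetD)
  have "0 \<le> s q"
    using continuous_ge_on_closure[OF s(1) q_cl, of 0] s(2) by simp
  moreover have "\<not> 0 < s q"
  proof
    assume "0 < s q"
    then obtain \<delta> where "0 < \<delta>" and exp_le: "\<And>y. y \<in> \<Omega> \<Longrightarrow> dist y q < \<delta> \<Longrightarrow> exp (\<rho> y) \<le> 2 / s q"
      using exp_bounded_near_positive_extension[OF s q_cl] by blast
    have "0 < min (\<delta>/2) (1/2)"
      using \<open>0 < \<delta>\<close> by simp
    then obtain N where N: "\<And>n. N \<le> n \<Longrightarrow> dist (X n) q < min (\<delta>/2) (1/2)"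
      using metric_LIMSEQ_D[OF X(2)] by blast
    have "q \<in> \<Omega>"
    proof (rule conf_complete_limit_in[OF complete _ X(2)])
      show "X n \<in> \<Omega>" for n
        using cap X(1) by (rule subsetD)
      show "conf_dist \<Omega> \<rho> (X m) (X n) \<le> 2 * (2 / s q) * dist (X m) (X n)" if "N \<le> m" "N \<le> n" for m n
        by (rule conf_dist_open_cap_le[OF cap c(1) q \<open>0 < \<delta>\<close> exp_le X(1) N[OF that(1)] X(1) N[OF that(2)]])
    qed
    with \<open>q \<notin> \<Omega>\<close> show False ..
  qed
  ultimately show "s q = 0"
    by simp
qed

lemma exists_cap_rim_near:
  fixes \<Omega> :: "'a::euclidean_space set"
  assumes sub: "\<Omega> \<subseteq> sphere 0 1" and op: "openin (top_of_set (sphere 0 1)) \<Omega>"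
    and x: "x \<in> closure \<Omega>" "x \<notin> \<Omega>" and "0 < \<epsilon>"
  obtains p q where "norm p = 1" "norm q = 1" "0 \<le> q \<bullet> p" "q \<bullet> p < 1" "q \<notin> \<Omega>"
    "open_cap p (q \<bullet> p) \<subseteq> \<Omega>" "dist q x < \<epsilon>"
proof -
  define F where "F = sphere 0 1 - \<Omega>"
  have "closedin (top_of_set (sphere 0 1)) F"
    unfolding F_def using op by (intro closedin_diff) auto
  then have "closed F"
    using closed_sphere by (rule closedin_closed_trans)
  have "x \<in> F"
    unfolding F_def using x closure_minimal[OF sub closed_sphere] by auto
  obtain p where p\<Omega>: "p \<in> \<Omega>" and px: "dist p x < min (\<epsilon>/2) (1/2)"
    using x(1) \<open>0 < \<epsilon>\<close> unfolding closure_approachable by (metis half_gt_zero min_less_iff_conj zero_less_one)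
  obtain q where qF: "q \<in> F" and nearest: "\<And>y. y \<in> F \<Longrightarrow> dist p q \<le> dist p y"
    using distance_attains_inf[OF \<open>closed F\<close>, of p] \<open>x \<in> F\<close> by blast
  have p: "norm p = 1" and q: "norm q = 1" "q \<notin> \<Omega>"
    using p\<Omega> sub qF by (auto simp: F_def)
  have "dist p q \<le> dist p x"
    using \<open>x \<in> F\<close> by (rule nearest)
  have "0 < dist p q"
    using p\<Omega> q(2) by auto
  have "dist p q < 1"
    using \<open>dist p q \<le> dist p x\<close> px by linarith
  then have "(dist p q)\<^sup>2 < 1"
    using \<open>0 < dist p q\<close> by (simp add: power_less_one_iff)
  moreover have "0 < (dist p q)\<^sup>2"
    using \<open>0 < dist p q\<close> by simp
  ultimately have "0 \<le> q \<bullet> p" "q \<bullet> p < 1"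
    using dist_sphere_sq[OF p q(1)] by linarith+
  moreover have "open_cap p (q \<bullet> p) \<subseteq> \<Omega>"
  proof
    fix y assume "y \<in> open_cap p (q \<bullet> p)"
    then have "norm y = 1" "dist p y < dist p q"
      by (auto simp: open_cap_eq_sphere_inter_ball[OF p q(1)])
    then show "y \<in> \<Omega>"
      using nearest[of y] by (auto simp: F_def)
  qed
  moreover have "dist q x < \<epsilon>"
    using dist_triangle[of q x p] \<open>dist p q \<le> dist p x\<close> px by (simp add: dist_commute)
  ultimately show ?thesis
    using that p q by blast
qed

lemma extension_vanishes_on_boundary:
  fixes \<Omega> :: "'a::euclidean_space set"
  assumes sub: "\<Omega> \<subseteq> sphere 0 1" and op: "openin (top_of_set (sphere 0 1)) \<Omega>"
    and complete: "conf_complete \<Omega> \<rho>"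
    and s: "continuous_on (closure \<Omega>) s" "\<forall>x\<in>\<Omega>. s x = exp (- \<rho> x)"
    and x: "x \<in> closure \<Omega>" "x \<notin> \<Omega>"
  shows "s x = 0"
proof -
  have bound: "\<bar>s x\<bar> < e" if "0 < e" for e
  proof -
    obtain d where "0 < d" and d: "\<And>y. y \<in> closure \<Omega> \<Longrightarrow> dist y x < d \<Longrightarrow> dist (s y) (s x) < e"
      using s(1) x(1) \<open>0 < e\<close> unfolding continuous_on_iff by meson
    obtain p q where "norm p = 1" "norm q = 1" "0 \<le> q \<bullet> p" "q \<bullet> p < 1" "q \<notin> \<Omega>"
      "open_cap p (q \<bullet> p) \<subseteq> \<Omega>" "dist q x < d"
      using exists_cap_rim_near[OF sub op x \<open>0 < d\<close>] by blast
    then have "q \<in> closure \<Omega>" "s q = 0"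
      using extension_vanishes_at_cap_rim[OF complete s] by blast+
    with d[of q] \<open>dist q x < d\<close> show ?thesis
      by (simp add: dist_real_def)
  qed
  show ?thesis
  proof (rule ccontr)
    assume "s x \<noteq> 0"
    then show False
      using bound[of "\<bar>s x\<bar>"] by simp
  qed
qed

lemma continuous_on_assoc_map:
  assumes "sphere_C1 \<Omega> \<rho>"
  shows "continuous_on \<Omega> (assoc_map \<Omega> \<rho>)"
proof -
  have "continuous_on \<Omega> \<rho>"
    using assms unfolding sphere_C1_def continuous_on_eq_continuous_within
    by (metis has_derivative_continuous)
  moreover have "continuous_on \<Omega> (sgrad \<Omega> \<rho>)"
    using assms unfolding sphere_C1_def by blast
  ultimately show ?thesis
    unfolding assoc_map_def Let_def by (intro continuous_intros) auto
qed

lemma exp_le_norm_assoc_map: "exp (\<rho> x) \<le> 2 * norm (assoc_map \<Omega> \<rho> x)"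
proof -
  have "exp (\<rho> x) / 2 * 1 \<le> exp (\<rho> x) / 2 * (1 + exp (-2 * \<rho> x) * (1 + (norm (sgrad \<Omega> \<rho> x))\<^sup>2))"
    by (intro mult_left_mono) auto
  also have "\<dots> = fst (assoc_map \<Omega> \<rho> x)"
    by (simp add: assoc_map_def Let_def)
  also have "\<dots> \<le> norm (assoc_map \<Omega> \<rho> x)"
    using norm_fst_le[of "fst (assoc_map \<Omega> \<rho> x)" "snd (assoc_map \<Omega> \<rho> x)"] by simp
  finally show ?thesis
    by simp
qed

lemma compact_preimage_if_closure_subset:
  fixes f :: "'a::heine_borel \<Rightarrow> 'b::topological_space"
  assumes "continuous_on S f" "bounded S" "closed K" and cl: "closure {x \<in> S. f x \<in> K} \<subseteq> S"
  shows "compact {x \<in> S. f x \<in> K}"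
proof -
  obtain T where "closed T" and T: "{x \<in> S. f x \<in> K} = S \<inter> T"
    using continuous_closedin_preimage[OF assms(1,3)] unfolding closedin_closed by (auto simp: vimage_def Int_def)
  have "closure {x \<in> S. f x \<in> K} \<subseteq> T"
    using T \<open>closed T\<close> by (intro closure_minimal) auto
  with cl T have "closed {x \<in> S. f x \<in> K}"
    by (metis closure_subset_eq le_inf_iff)
  moreover have "bounded {x \<in> S. f x \<in> K}"
    using assms(2) by (rule bounded_subset) auto
  ultimately show ?thesis
    by (simp add: compact_eq_bounded_closed)
qed

lemma closure_assoc_map_preimage_subset:
  fixes \<Omega> :: "'a::euclidean_space set" and K :: "(real \<times> 'a) set"
  assumes sub: "\<Omega> \<subseteq> sphere 0 1" and op: "openin (top_of_set (sphere 0 1)) \<Omega>"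
    and complete: "conf_complete \<Omega> \<rho>"
    and s: "continuous_on (closure \<Omega>) s" "\<forall>x\<in>\<Omega>. s x = exp (- \<rho> x)"
    and "bounded K"
  shows "closure {x \<in> \<Omega>. assoc_map \<Omega> \<rho> x \<in> K} \<subseteq> \<Omega>"
proof
  define A where "A = {x \<in> \<Omega>. assoc_map \<Omega> \<rho> x \<in> K}"
  obtain B where "0 < B" and B: "\<And>k. k \<in> K \<Longrightarrow> norm k \<le> B"
    using \<open>bounded K\<close> unfolding bounded_pos by blast
  have s_ge: "1 / (2 * B) \<le> s x" if "x \<in> A" for x
  proof -
    have "exp (\<rho> x) \<le> 2 * B"
      using exp_le_norm_assoc_map[of \<rho> x \<Omega>] B[of "assoc_map \<Omega> \<rho> x"] that by (auto simp: A_def)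
    then have "1 / (2 * B) \<le> 1 / exp (\<rho> x)"
      by (intro frac_le) auto
    also have "\<dots> = s x"
      using that s(2) by (simp add: A_def exp_minus inverse_eq_divide)
    finally show ?thesis .
  qed
  fix x assume x: "x \<in> closure A"
  have "closure A \<subseteq> closure \<Omega>"
    by (rule closure_mono) (auto simp: A_def)
  with x have "x \<in> closure \<Omega>" and "1 / (2 * B) \<le> s x"
    using continuous_ge_on_closure[OF continuous_on_subset[OF s(1)] x s_ge] by auto
  with \<open>0 < B\<close> show "x \<in> \<Omega>"
    using extension_vanishes_on_boundary[OF sub op complete s] by force
qed

theorem mainTheorem3:
  fixes \<Omega> :: "'a::euclidean_space set" and \<rho> :: "'a \<Rightarrow> real"
  assumes "\<Omega> \<subseteq> sphere 0 1" and "\<Omega> \<noteq> sphere 0 1"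
    and "openin (top_of_set (sphere 0 1)) \<Omega>" and "connected \<Omega>" and "\<Omega> \<noteq> {}"
    and "sphere_C1 \<Omega> \<rho>"
    and "conf_complete \<Omega> \<rho>"
    and "\<exists>s. continuous_on (closure \<Omega>) s \<and> (\<forall>x\<in>\<Omega>. s x = exp (- \<rho> x))"
  shows "\<forall>K. K \<subseteq> hyperbolic_space \<and> compact K
           \<longrightarrow> compact {x \<in> \<Omega>. assoc_map \<Omega> \<rho> x \<in> K}"
proof (intro allI impI)
  fix K :: "(real \<times> 'a) set"
  assume "K \<subseteq> hyperbolic_space \<and> compact K"
  then have "compact K" ..
  obtain s where s: "continuous_on (closure \<Omega>) s" "\<forall>x\<in>\<Omega>. s x = exp (- \<rho> x)"
    using assms(8) by blast
  have "closure {x \<in> \<Omega>. assoc_map \<Omega> \<rho> x \<in> K} \<subseteq> \<Omega>"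
    using assms(1,3,7) s compact_imp_bounded[OF \<open>compact K\<close>]
    by (rule closure_assoc_map_preimage_subset)
  moreover have "continuous_on \<Omega> (assoc_map \<Omega> \<rho>)"
    using assms(6) by (rule continuous_on_assoc_map)
  moreover have "bounded \<Omega>"
    using assms(1) by (rule bounded_subset[OF bounded_sphere])
  ultimately show "compact {x \<in> \<Omega>. assoc_map \<Omega> \<rho> x \<in> K}"
    using compact_imp_closed[OF \<open>compact K\<close>] by (intro compact_preimage_if_closure_subset)
qed

end
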